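(* The category $\sigma\mathbb{RS}_u$ is isomorphic to the variety $\mathcal{V}_{\sigma\mathbb{RS}_u}$ via the functor $T_u$ that forgets $\bigvee^-$ (interpreting $1$ as the designated weak unit; identity on maps) and the functor $E_u$ that adds $\bigvee^-(g,f_1,f_2,\dots):=\sup_{n\ge1}\{f_n\wedge g\}$ and interprets $1$ as the designated weak unit (identity on maps); these are well defined and mutually inverse. In particular the category of Dedekind $\sigma$-complete Riesz spaces with weak unit is an infinitary variety.
   Context: A weak unit of a Riesz space $G$ is an element $1\ge0$ such that $f\wedge1=0$ implies $f=0$. $\sigma\mathbb{RS}_u$: Dedekind $\sigma$-complete Riesz spaces (every countable bounded-above subset has a supremum) with a designated weak unit, and Riesz morphisms preserving existing countable suprema and the designated unit. $\mathcal{V}_{\sigma\mathbb{RS}_u}$: algebras with the Riesz space operations, a countably infinitary operation $\bigvee^-$ (write $\bigvee_{n\ge1}^g f_n:=\bigvee^-(g,f_1,f_2,\dots)$) and a constant $1$, satisfying the Riesz space axioms, (A1) $\bigvee_{n\ge1}^g f_n=\bigvee_{n\ge1}^g(f_n\wedge g)$; (A2) $\bigvee_{n\ge1}^g f_n=(f_1\wedge g)\vee\bigvee^-(g,f_2,f_3,\dots)$; (A3) $\bigvee_{n\ge1}^g(f_n\wedge h)\le h$ ($a\le b$ meaning $a\wedge b=a$); and $\bigvee_{n\ge1}^{|f|}(|f|\wedge n1)=|f|$. Morphisms preserve all operations. *)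

theory Defs
  imports Complex_Main "HOL-Library.Countable_Set"
begin

text \<open>Riesz-space signature on a carrier type 'a (the whole type is the carrier).\<close>
record 'a rops =
  radd   :: "'a \<Rightarrow> 'a \<Rightarrow> 'a"
  rzero  :: 'a
  rneg   :: "'a \<Rightarrow> 'a"
  rscale :: "real \<Rightarrow> 'a \<Rightarrow> 'a"
  rsup   :: "'a \<Rightarrow> 'a \<Rightarrow> 'a"
  rinf   :: "'a \<Rightarrow> 'a \<Rightarrow> 'a"

definition rle :: "'a rops \<Rightarrow> 'a \<Rightarrow> 'a \<Rightarrow> bool" where
  "rle R a b \<longleftrightarrow> rinf R a b = a"

definition rabs :: "'a rops \<Rightarrow> 'a \<Rightarrow> 'a" where
  "rabs R f = rsup R f (rneg R f)"

definition riesz_space :: "'a rops \<Rightarrow> bool" where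
  "riesz_space R \<longleftrightarrow>
     \<comment> \<open>real vector space\<close>
     (\<forall>x y z. radd R (radd R x y) z = radd R x (radd R y z)) \<and>
     (\<forall>x y. radd R x y = radd R y x) \<and>
     (\<forall>x. radd R (rzero R) x = x) \<and>
     (\<forall>x. radd R (rneg R x) x = rzero R) \<and>
     (\<forall>r x y. rscale R r (radd R x y) = radd R (rscale R r x) (rscale R r y)) \<and>
     (\<forall>r s x. rscale R (r + s) x = radd R (rscale R r x) (rscale R s x)) \<and>
     (\<forall>r s x. rscale R r (rscale R s x) = rscale R (r * s) x) \<and>
     (\<forall>x. rscale R 1 x = x) \<and>
     \<comment> \<open>lattice\<close>
     (\<forall>x y z. rsup R (rsup R x y) z = rsup R x (rsup R y z)) \<and>
     (\<forall>x y z. rinf R (rinf R x y) z = rinf R x (rinf R y z)) \<and>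
     (\<forall>x y. rsup R x y = rsup R y x) \<and>
     (\<forall>x y. rinf R x y = rinf R y x) \<and>
     (\<forall>x y. rsup R x (rinf R x y) = x) \<and>
     (\<forall>x y. rinf R x (rsup R x y) = x) \<and>
     \<comment> \<open>compatibility of the order with the vector space structure\<close>
     (\<forall>x y z. rle R x y \<longrightarrow> rle R (radd R x z) (radd R y z)) \<and>
     (\<forall>r x. 0 \<le> r \<and> rle R (rzero R) x \<longrightarrow> rle R (rzero R) (rscale R r x))"

definition riesz_hom :: "'a rops \<Rightarrow> 'b rops \<Rightarrow> ('a \<Rightarrow> 'b) \<Rightarrow> bool" where
  "riesz_hom R S h \<longleftrightarrow>
     (\<forall>x y. h (radd R x y) = radd S (h x) (h y)) \<and>
     (\<forall>r x. h (rscale R r x) = rscale S r (h x)) \<and>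
     (\<forall>x y. h (rsup R x y) = rsup S (h x) (h y)) \<and>
     (\<forall>x y. h (rinf R x y) = rinf S (h x) (h y))"

definition is_lub :: "'a rops \<Rightarrow> 'a set \<Rightarrow> 'a \<Rightarrow> bool" where
  "is_lub R S s \<longleftrightarrow> (\<forall>x\<in>S. rle R x s) \<and> (\<forall>b. (\<forall>x\<in>S. rle R x b) \<longrightarrow> rle R s b)"

definition rSup :: "'a rops \<Rightarrow> 'a set \<Rightarrow> 'a" where
  "rSup R S = (THE s. is_lub R S s)"

definition sigma_complete :: "'a rops \<Rightarrow> bool" where
  "sigma_complete R \<longleftrightarrow>
     (\<forall>S. countable S \<and> S \<noteq> {} \<and> (\<exists>b. \<forall>x\<in>S. rle R x b) \<longrightarrow> (\<exists>s. is_lub R S s))"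

definition weak_unit :: "'a rops \<Rightarrow> 'a \<Rightarrow> bool" where
  "weak_unit R u \<longleftrightarrow> rle R (rzero R) u \<and> (\<forall>f. rinf R f u = rzero R \<longrightarrow> f = rzero R)"

record 'a srsu =
  sops  :: "'a rops"
  sunit :: 'a

definition srsu_obj :: "'a srsu \<Rightarrow> bool" where
  "srsu_obj A \<longleftrightarrow> riesz_space (sops A) \<and> sigma_complete (sops A) \<and> weak_unit (sops A) (sunit A)"

definition srsu_hom :: "'a srsu \<Rightarrow> 'b srsu \<Rightarrow> ('a \<Rightarrow> 'b) \<Rightarrow> bool" where
  "srsu_hom A B h \<longleftrightarrow>
     riesz_hom (sops A) (sops B) h \<and>
     (\<forall>S s. countable S \<and> S \<noteq> {} \<and> is_lub (sops A) S s \<longrightarrow> is_lub (sops B) (h ` S) (h s)) \<and>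
     h (sunit A) = sunit B"

text \<open>Algebras of the variety V_{sigma RS_u}. The sequence f_1, f_2, ... is indexed by
  nat starting at 0: vsupr g f stands for \<Or>^g_{n\<ge>1} f_n with f_n = f (n-1).\<close>
record 'a valg =
  vops  :: "'a rops"
  vone  :: 'a
  vsupr :: "'a \<Rightarrow> (nat \<Rightarrow> 'a) \<Rightarrow> 'a"

definition valg_obj :: "'a valg \<Rightarrow> bool" where
  "valg_obj V \<longleftrightarrow>
     riesz_space (vops V) \<and>
     (\<forall>g f. vsupr V g f = vsupr V g (\<lambda>n. rinf (vops V) (f n) g)) \<and>
     (\<forall>g f. vsupr V g f = rsup (vops V) (rinf (vops V) (f 0) g) (vsupr V g (\<lambda>n. f (Suc n)))) \<and>
     (\<forall>g f h. rle (vops V) (vsupr V g (\<lambda>n. rinf (vops V) (f n) h)) h) \<and>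
     (\<forall>f. vsupr V (rabs (vops V) f)
            (\<lambda>n. rinf (vops V) (rabs (vops V) f) (rscale (vops V) (real (Suc n)) (vone V)))
          = rabs (vops V) f)"

definition valg_hom :: "'a valg \<Rightarrow> 'b valg \<Rightarrow> ('a \<Rightarrow> 'b) \<Rightarrow> bool" where
  "valg_hom V W h \<longleftrightarrow>
     (\<forall>x y. h (radd (vops V) x y) = radd (vops W) (h x) (h y)) \<and>
     h (rzero (vops V)) = rzero (vops W) \<and>
     (\<forall>x. h (rneg (vops V) x) = rneg (vops W) (h x)) \<and>
     (\<forall>r x. h (rscale (vops V) r x) = rscale (vops W) r (h x)) \<and>
     (\<forall>x y. h (rsup (vops V) x y) = rsup (vops W) (h x) (h y)) \<and>
     (\<forall>x y. h (rinf (vops V) x y) = rinf (vops W) (h x) (h y)) \<and>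
     (\<forall>g f. h (vsupr V g f) = vsupr W (h g) (\<lambda>n. h (f n))) \<and>
     h (vone V) = vone W"

definition T_u :: "'a valg \<Rightarrow> 'a srsu" where
  "T_u V = \<lparr>sops = vops V, sunit = vone V\<rparr>"

definition E_u :: "'a srsu \<Rightarrow> 'a valg" where
  "E_u A = \<lparr>vops = sops A, vone = sunit A,
            vsupr = (\<lambda>g f. rSup (sops A) (range (\<lambda>n. rinf (sops A) (f n) g)))\<rparr>"

end

theory Submission
  imports Defs "HOL-Library.Lattice_Algebras"
begin

text \<open>A Dedekind \<open>\<sigma>\<close>-complete Riesz space is Archimedean, and this makes every
  \<open>x \<ge> 0\<close> the supremum of its truncations \<open>x \<sqinter> n e\<close> by a weak unit \<open>e\<close>: if all of
  them lie below \<open>y\<close>, then \<open>w = (x - x \<sqinter> y) \<sqinter> e\<close> satisfies \<open>n w \<le> x\<close> for all \<open>n\<close>, so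
  \<open>w = 0\<close> and hence \<open>x \<sqinter> y = x\<close>. This is axiom (A4) for \<open>E\<^sub>u\<close>; (A1)--(A3) hold for any
  supremum operation. Conversely, (A1)--(A3) force \<open>\<Or>\<^sup>g f\<^sub>n\<close> to be the supremum of
  the \<open>f\<^sub>n \<sqinter> g\<close>, so every countable set bounded by \<open>g\<close> has a supremum; and (A4), applied to
  the positive part of \<open>-1\<close> and to elements disjoint from \<open>1\<close>, shows that \<open>1\<close> is a weak unit.
  Since \<open>\<Or>\<close> is thus determined by the order, \<open>T\<^sub>u\<close> and \<open>E\<^sub>u\<close> are mutually inverse, and
  the same description identifies preservation of countable suprema with preservation
  of \<open>\<Or>\<close>.\<close>

text \<open>\<open>rdiff\<close> and \<open>rless\<close> supply the parameters \<open>minus\<close> and \<open>less\<close> of the library's ordered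
  group classes. \<open>rdiff\<close> must be a constant: with a \<open>\<lambda>\<close>-term as parameter the class simp rules
  relating \<open>a + - b\<close> and \<open>a - b\<close> loop.\<close>

definition rdiff :: "'a rops \<Rightarrow> 'a \<Rightarrow> 'a \<Rightarrow> 'a" where
  "rdiff R x y = radd R x (rneg R y)"

definition rless :: "'a rops \<Rightarrow> 'a \<Rightarrow> 'a \<Rightarrow> bool" where
  "rless R a b \<longleftrightarrow> rle R a b \<and> a \<noteq> b"

locale riesz =
  fixes R :: "'a rops"
  assumes riesz_space: "riesz_space R"
begin

abbreviation radd_syn (infixl "\<oplus>" 65) where "x \<oplus> y \<equiv> radd R x y"
abbreviation rdiff_syn (infixl "\<ominus>" 65) where "x \<ominus> y \<equiv> rdiff R x y"
abbreviation rscale_syn (infixr "\<odot>" 75) where "r \<odot> x \<equiv> rscale R r x"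
abbreviation rinf_syn (infixl "\<sqinter>" 70) where "x \<sqinter> y \<equiv> rinf R x y"
abbreviation rsup_syn (infixl "\<squnion>" 65) where "x \<squnion> y \<equiv> rsup R x y"
abbreviation rle_syn (infix "\<preceq>" 50) where "x \<preceq> y \<equiv> rle R x y"
abbreviation rzero_syn ("\<zero>") where "\<zero> \<equiv> rzero R"

lemma
  shows radd_assoc: "x \<oplus> y \<oplus> z = x \<oplus> (y \<oplus> z)"
    and radd_commute: "x \<oplus> y = y \<oplus> x"
    and radd_zero_left: "\<zero> \<oplus> x = x"
    and radd_neg_left: "rneg R x \<oplus> x = \<zero>"
    and rscale_add_right: "a \<odot> (x \<oplus> y) = a \<odot> x \<oplus> a \<odot> y"
    and rscale_add_left: "(a + b) \<odot> x = a \<odot> x \<oplus> b \<odot> x"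
    and rscale_rscale: "a \<odot> b \<odot> x = (a * b) \<odot> x"
    and rscale_one: "1 \<odot> x = x"
    and rsup_assoc: "x \<squnion> y \<squnion> z = x \<squnion> (y \<squnion> z)"
    and rinf_assoc: "x \<sqinter> y \<sqinter> z = x \<sqinter> (y \<sqinter> z)"
    and rsup_commute: "x \<squnion> y = y \<squnion> x"
    and rinf_commute: "x \<sqinter> y = y \<sqinter> x"
    and rsup_absorb_inf: "x \<squnion> x \<sqinter> y = x"
    and rinf_absorb_sup: "x \<sqinter> (x \<squnion> y) = x"
    and radd_right_mono: "x \<preceq> y \<Longrightarrow> x \<oplus> z \<preceq> y \<oplus> z"
    and rscale_nonneg: "0 \<le> a \<Longrightarrow> \<zero> \<preceq> x \<Longrightarrow> \<zero> \<preceq> a \<odot> x"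
  using riesz_space unfolding riesz_space_def by auto

lemma rinf_idem: "x \<sqinter> x = x"
  by (metis rinf_absorb_sup rsup_absorb_inf)

lemma rle_iff_sup: "x \<preceq> y \<longleftrightarrow> x \<squnion> y = y"
  unfolding rle_def by (metis rinf_absorb_sup rsup_absorb_inf rinf_commute rsup_commute)

sublocale rs: lattice "rinf R" "rle R" "rless R" "rsup R"
proof unfold_locales
  fix x y z
  show "rless R x y \<longleftrightarrow> x \<preceq> y \<and> \<not> y \<preceq> x"
    unfolding rless_def rle_def by (metis rinf_commute)
  show "x \<preceq> x"
    unfolding rle_def by (rule rinf_idem)
  show "x \<preceq> y \<Longrightarrow> y \<preceq> z \<Longrightarrow> x \<preceq> z"
    unfolding rle_def by (metis rinf_assoc)
  show "x \<preceq> y \<Longrightarrow> y \<preceq> x \<Longrightarrow> x = y"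
    unfolding rle_def by (metis rinf_commute)
  show "x \<sqinter> y \<preceq> x"
    unfolding rle_def by (metis rinf_assoc rinf_commute rinf_idem)
  show "x \<sqinter> y \<preceq> y"
    unfolding rle_def by (metis rinf_assoc rinf_idem)
  show "x \<preceq> y \<Longrightarrow> x \<preceq> z \<Longrightarrow> x \<preceq> y \<sqinter> z"
    unfolding rle_def by (metis rinf_assoc)
  show "x \<preceq> x \<squnion> y"
    unfolding rle_iff_sup by (metis rsup_assoc rinf_idem rsup_absorb_inf)
  show "y \<preceq> x \<squnion> y"
    unfolding rle_iff_sup by (metis rsup_assoc rsup_commute rinf_idem rsup_absorb_inf)
  show "y \<preceq> x \<Longrightarrow> z \<preceq> x \<Longrightarrow> y \<squnion> z \<preceq> x"
    unfolding rle_iff_sup by (metis rsup_assoc)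
qed

sublocale rs: lattice_ab_group_add_abs "rabs R" "radd R" "rzero R" "rdiff R" "rneg R"
    "rle R" "rless R" "rinf R" "rsup R"
proof unfold_locales
  fix x y z
  show "x \<oplus> y \<oplus> z = x \<oplus> (y \<oplus> z)" "x \<oplus> y = y \<oplus> x" "\<zero> \<oplus> x = x"
       "rneg R x \<oplus> x = \<zero>"
    by (rule radd_assoc radd_commute radd_zero_left radd_neg_left)+
  show "x \<ominus> y = x \<oplus> rneg R y"
    by (rule rdiff_def)
  show "x \<preceq> y \<Longrightarrow> z \<oplus> x \<preceq> z \<oplus> y"
    by (metis radd_commute radd_right_mono)
  show "rabs R x = x \<squnion> rneg R x"
    by (rule rabs_def)
qed

text \<open>The derived scaling laws of \<open>real_vector\<close> stem from a global \<open>vector_space\<close>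
  interpretation and are not inherited by the sublocale below.\<close>

lemma rscale_zero_left: "0 \<odot> x = \<zero>"
  using rscale_add_left[of 0 0 x] by simp

lemma rscale_minus_left: "(- a) \<odot> x = rneg R (a \<odot> x)"
  using rscale_add_left[of a "- a" x]
  by (metis add.right_inverse rs.add.commute rs.eq_neg_iff_add_eq_0 rscale_zero_left)

lemma rscale_diff_left: "(a - b) \<odot> x = a \<odot> x \<ominus> b \<odot> x"
  using rscale_add_left[of a "- b" x] by (simp add: rscale_minus_left)

lemma rscale_minus_right: "a \<odot> rneg R x = rneg R (a \<odot> x)"
  by (metis rscale_rscale mult.commute mult_minus1 rscale_one rscale_minus_left)

lemma rscale_diff_right: "a \<odot> (x \<ominus> y) = a \<odot> x \<ominus> a \<odot> y"
  unfolding rdiff_def by (simp only: rscale_add_right rscale_minus_right)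

sublocale rs: ordered_real_vector "radd R" "rzero R" "rdiff R" "rneg R"
    "rle R" "rless R" "rscale R"
proof unfold_locales
  fix x y :: 'a and a b :: real
  show "a \<odot> (x \<oplus> y) = a \<odot> x \<oplus> a \<odot> y" "(a + b) \<odot> x = a \<odot> x \<oplus> b \<odot> x"
       "a \<odot> b \<odot> x = (a * b) \<odot> x" "1 \<odot> x = x"
    by (rule rscale_add_right rscale_add_left rscale_rscale rscale_one)+
  show "a \<odot> x \<preceq> a \<odot> y" if "x \<preceq> y" "0 \<le> a"
  proof -
    have "\<zero> \<preceq> a \<odot> (y \<ominus> x)"
      using that by (simp add: rscale_nonneg)
    then show ?thesis
      unfolding rscale_diff_right by simp
  qed
  show "a \<odot> x \<preceq> b \<odot> x" if "a \<le> b" "\<zero> \<preceq> x"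
  proof -
    have "\<zero> \<preceq> (b - a) \<odot> x"
      using that by (simp add: rscale_nonneg)
    then show ?thesis
      unfolding rscale_diff_left by simp
  qed
qed

lemma rscale_of_nat_Suc: "real (Suc n) \<odot> x = real n \<odot> x \<oplus> x"
proof -
  have "real (Suc n) = real n + 1"
    by simp
  then show ?thesis
    by (simp only: rscale_add_left rscale_one)
qed

lemma is_lub_upper: "is_lub R S s \<Longrightarrow> x \<in> S \<Longrightarrow> x \<preceq> s"
  unfolding is_lub_def by blast

lemma is_lub_least: "is_lub R S s \<Longrightarrow> (\<And>x. x \<in> S \<Longrightarrow> x \<preceq> b) \<Longrightarrow> s \<preceq> b"
  unfolding is_lub_def by blast

lemma is_lub_unique: "is_lub R S s \<Longrightarrow> is_lub R S t \<Longrightarrow> s = t"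
  by (rule rs.order.antisym; erule is_lub_least) (auto intro: is_lub_upper)

lemma rSup_eq: "is_lub R S s \<Longrightarrow> rSup R S = s"
  unfolding rSup_def by (blast intro: is_lub_unique)

lemma range_truncate_from_nat_into:
  assumes "countable S" "S \<noteq> {}" "\<And>x. x \<in> S \<Longrightarrow> x \<preceq> b"
  shows "range (\<lambda>n. from_nat_into S n \<sqinter> b) = S"
proof -
  have "from_nat_into S n \<sqinter> b = from_nat_into S n" for n
    using assms(2,3) by (simp add: from_nat_into rs.inf_absorb1)
  then show ?thesis
    using range_from_nat_into[OF assms(2,1)] by simp
qed

lemma is_lub_range_Suc:
  fixes f :: "nat \<Rightarrow> 'a"
  assumes "is_lub R (range (\<lambda>n. f (Suc n))) s"
  shows "is_lub R (range f) (f 0 \<squnion> s)"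
  unfolding is_lub_def
proof (intro conjI allI impI ballI)
  fix x assume "x \<in> range f"
  then obtain n where "x = f n" by blast
  then show "x \<preceq> f 0 \<squnion> s"
    using is_lub_upper[OF assms] by (cases n) (auto intro: rs.le_supI2)
next
  fix b assume b: "\<forall>x\<in>range f. x \<preceq> b"
  have "s \<preceq> b"
    by (rule is_lub_least[OF assms]) (use b in blast)
  with b show "f 0 \<squnion> s \<preceq> b"
    by (simp add: rs.le_supI)
qed

lemma disjoint_add:
  assumes "\<zero> \<preceq> b" "\<zero> \<preceq> c" "a \<sqinter> b = \<zero>" "a \<sqinter> c = \<zero>"
  shows "a \<sqinter> (b \<oplus> c) = \<zero>"
proof -
  define t where "t = a \<sqinter> (b \<oplus> c)"
  have "t \<ominus> c \<preceq> a \<sqinter> b"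
  proof (rule rs.le_infI)
    show "t \<ominus> c \<preceq> a"
      using assms(2) by (simp add: t_def rs.le_infI1 rs.diff_le_eq rs.add_increasing2)
    show "t \<ominus> c \<preceq> b"
      by (simp add: t_def rs.diff_le_eq)
  qed
  then have "t \<preceq> a \<sqinter> c"
    using assms(3) by (simp add: t_def)
  moreover have "\<zero> \<preceq> t"
    using assms by (metis rs.add_nonneg_nonneg rs.inf_le1 rs.le_infI t_def)
  ultimately show ?thesis
    using assms(4) unfolding t_def by (metis rs.order.antisym)
qed

lemma disjoint_rscale_of_nat:
  assumes "\<zero> \<preceq> b" "a \<sqinter> b = \<zero>"
  shows "a \<sqinter> real n \<odot> b = \<zero>"
proof (induction n)
  case 0
  have "\<zero> \<preceq> a"
    using assms(2) rs.inf_le1 by metis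
  then show ?case
    by (simp add: rscale_zero_left rs.inf_absorb2)
next
  case (Suc n)
  have "\<zero> \<preceq> real n \<odot> b"
    using assms(1) by (simp add: rscale_nonneg)
  then show ?case
    unfolding rscale_of_nat_Suc by (rule disjoint_add[OF _ assms(1) Suc.IH assms(2)])
qed

lemma rscale_le_truncation:
  assumes x: "\<zero> \<preceq> x" and we: "w \<preceq> e" and w: "\<And>k. w \<preceq> x \<ominus> x \<sqinter> real k \<odot> e"
  shows "real n \<odot> w \<preceq> x \<sqinter> real n \<odot> e"
proof (induction n)
  case 0
  show ?case
    using x by (simp add: rscale_zero_left)
next
  case (Suc n)
  let ?a = "x \<sqinter> real n \<odot> e"
  have "real (Suc n) \<odot> w \<preceq> ?a \<oplus> w"
    unfolding rscale_of_nat_Suc using Suc.IH by (rule rs.add_right_mono)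
  moreover have "?a \<oplus> w \<preceq> x"
    using w[of n] by (simp only: rs.le_diff_eq rs.add.commute)
  moreover have "?a \<oplus> w \<preceq> real (Suc n) \<odot> e"
    unfolding rscale_of_nat_Suc using we by (intro rs.add_mono) simp_all
  ultimately show ?case
    by (meson rs.le_infI rs.order.trans)
qed

lemma pprt_inf_pprt_uminus: "rs.pprt x \<sqinter> rs.pprt (rneg R x) = \<zero>"
proof -
  have "(rs.pprt x \<sqinter> rneg R (rs.nprt x)) \<oplus> rs.nprt x = rs.nprt x"
    unfolding rs.add_inf_distrib_right rs.prts[symmetric] rs.left_minus by (rule rs.nprt_def[symmetric])
  then show ?thesis
    by (simp only: rs.pprt_neg rs.add_cancel_left_left)
qed

end

locale sigma_complete_riesz = riesz +
  assumes sigma_complete: "sigma_complete R"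
begin

lemma is_lub_range_bounded:
  fixes f :: "nat \<Rightarrow> 'a"
  assumes "\<And>n. f n \<preceq> b"
  shows "is_lub R (range f) (rSup R (range f))"
proof -
  have "countable (range f)"
    by (rule countable_image) (rule countableI_type)
  then have "countable (range f) \<and> range f \<noteq> {} \<and> (\<exists>b. \<forall>x\<in>range f. x \<preceq> b)"
    using assms by blast
  then have "\<exists>s. is_lub R (range f) s"
    using sigma_complete unfolding sigma_complete_def by (elim allE impE)
  then show ?thesis
    using rSup_eq by metis
qed

lemma is_lub_range_inf:
  fixes f :: "nat \<Rightarrow> 'a"
  shows "is_lub R (range (\<lambda>n. f n \<sqinter> g)) (rSup R (range (\<lambda>n. f n \<sqinter> g)))"
  by (rule is_lub_range_bounded) (rule rs.inf_le2)

lemma archimedean: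
  assumes "\<zero> \<preceq> w" and "\<And>n. real n \<odot> w \<preceq> x"
  shows "w = \<zero>"
proof -
  define s where "s = rSup R (range (\<lambda>n. real n \<odot> w))"
  have s: "is_lub R (range (\<lambda>n. real n \<odot> w)) s"
    unfolding s_def by (rule is_lub_range_bounded[OF assms(2)])
  have "real n \<odot> w \<oplus> w \<preceq> s" for n
    using is_lub_upper[OF s rangeI[of _ "Suc n"]] by (simp only: rscale_of_nat_Suc)
  then have "real n \<odot> w \<preceq> s \<ominus> w" for n
    by (simp only: rs.le_diff_eq)
  then have "s \<preceq> s \<ominus> w"
    by (auto intro: is_lub_least[OF s])
  then have "w \<preceq> \<zero>"
    by (simp only: rs.le_diff_eq rs.add_le_same_cancel1)
  then show ?thesis
    using assms(1) by (rule rs.order.antisym)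
qed

lemma weak_unit_truncations_le:
  assumes e: "weak_unit R e" and x: "\<zero> \<preceq> x"
    and le: "\<And>n. x \<sqinter> real (Suc n) \<odot> e \<preceq> y"
  shows "x \<preceq> y"
proof -
  have e0: "\<zero> \<preceq> e"
    using e unfolding weak_unit_def by blast
  have trunc_le: "x \<sqinter> real k \<odot> e \<preceq> x \<sqinter> y" for k
  proof -
    have "x \<sqinter> real k \<odot> e \<preceq> x \<sqinter> real (Suc k) \<odot> e"
      using e0 by (intro rs.inf_mono rs.order.refl rs.scaleR_right_mono) simp_all
    then have "x \<sqinter> real k \<odot> e \<preceq> y"
      using le[of k] by (rule rs.order.trans)
    then show ?thesis
      by (simp add: rs.le_infI)
  qed
  define w where "w = (x \<ominus> x \<sqinter> y) \<sqinter> e"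
  have "\<zero> \<preceq> x \<ominus> x \<sqinter> y"
    by (simp only: rs.diff_ge_0_iff_ge rs.inf_le1)
  then have w0: "\<zero> \<preceq> w"
    unfolding w_def using e0 by (rule rs.le_infI)
  have "w \<preceq> x \<ominus> x \<sqinter> real k \<odot> e" for k
    unfolding w_def by (rule rs.order.trans[OF rs.inf_le1 rs.diff_left_mono[OF trunc_le]])
  then have "real k \<odot> w \<preceq> x \<sqinter> real k \<odot> e" for k
    using x unfolding w_def by (intro rscale_le_truncation) simp_all
  then have "real k \<odot> w \<preceq> x" for k
    using rs.le_infE by blast
  then have "w = \<zero>"
    by (rule archimedean[OF w0])
  then have "x \<ominus> x \<sqinter> y = \<zero>"
    using e unfolding w_def weak_unit_def by blast
  then have "x \<sqinter> y = x"
    by (metis rs.eq_iff_diff_eq_0)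
  then show ?thesis
    by (simp only: rs.le_iff_inf)
qed

lemma rSup_range_inf_Suc:
  fixes f :: "nat \<Rightarrow> 'a"
  shows "rSup R (range (\<lambda>n. f n \<sqinter> g)) = (f 0 \<sqinter> g) \<squnion> rSup R (range (\<lambda>n. f (Suc n) \<sqinter> g))"
  by (rule rSup_eq) (rule is_lub_range_Suc[OF is_lub_range_inf])

lemma rSup_range_inf_le:
  fixes f :: "nat \<Rightarrow> 'a"
  shows "rSup R (range (\<lambda>n. f n \<sqinter> h \<sqinter> g)) \<preceq> h"
  by (rule is_lub_least[OF is_lub_range_inf]) (auto intro: rs.le_infI1)

lemma rSup_truncations:
  assumes "weak_unit R e" and "\<zero> \<preceq> x"
  shows "rSup R (range (\<lambda>n. x \<sqinter> real (Suc n) \<odot> e \<sqinter> x)) = x"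
proof (rule rSup_eq)
  show "is_lub R (range (\<lambda>n. x \<sqinter> real (Suc n) \<odot> e \<sqinter> x)) x"
    unfolding is_lub_def
  proof (intro conjI allI impI ballI)
    fix b assume "\<forall>y\<in>range (\<lambda>n. x \<sqinter> real (Suc n) \<odot> e \<sqinter> x). y \<preceq> b"
    then show "x \<preceq> b"
      using weak_unit_truncations_le[OF assms] by (simp add: rs.inf.absorb1)
  qed auto
qed

end

locale riesz_algebra = riesz R for R +
  fixes V :: "'a valg"
  assumes valg_obj: "valg_obj V" and vops_V: "vops V = R"
begin

lemma
  fixes f :: "nat \<Rightarrow> 'a"
  shows vsupr_inf: "vsupr V g f = vsupr V g (\<lambda>n. f n \<sqinter> g)"
    and vsupr_Suc: "vsupr V g f = (f 0 \<sqinter> g) \<squnion> vsupr V g (\<lambda>n. f (Suc n))"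
    and vsupr_le: "vsupr V g (\<lambda>n. f n \<sqinter> h) \<preceq> h"
    and vsupr_abs_truncations:
      "vsupr V (rabs R x) (\<lambda>n. rabs R x \<sqinter> real (Suc n) \<odot> vone V) = rabs R x"
  using valg_obj unfolding valg_obj_def vops_V by blast+

lemma vsupr_is_lub:
  fixes f :: "nat \<Rightarrow> 'a"
  shows "is_lub R (range (\<lambda>n. f n \<sqinter> g)) (vsupr V g f)"
  unfolding is_lub_def
proof (intro conjI allI impI ballI)
  have upper: "f n \<sqinter> g \<preceq> vsupr V g f" for f :: "nat \<Rightarrow> 'a" and n
  proof (induction n arbitrary: f)
    case 0
    show ?case
      by (subst vsupr_Suc) (rule rs.sup_ge1)
  next
    case (Suc n)
    have "vsupr V g (\<lambda>n. f (Suc n)) \<preceq> vsupr V g f"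
      by (subst (2) vsupr_Suc) (rule rs.sup_ge2)
    with Suc.IH[of "\<lambda>n. f (Suc n)"] show ?case
      by (rule rs.order.trans)
  qed
  then show "x \<preceq> vsupr V g f" if "x \<in> range (\<lambda>n. f n \<sqinter> g)" for x
    using that by blast
  fix b assume "\<forall>x\<in>range (\<lambda>n. f n \<sqinter> g). x \<preceq> b"
  then have "(\<lambda>n. f n \<sqinter> g) = (\<lambda>n. f n \<sqinter> g \<sqinter> b)"
    by (auto simp: rs.inf.absorb1)
  then have "vsupr V g f = vsupr V g (\<lambda>n. f n \<sqinter> g \<sqinter> b)"
    by (simp only: vsupr_inf[of g f])
  also have "\<dots> \<preceq> b"
    by (rule vsupr_le)
  finally show "vsupr V g f \<preceq> b" .
qed

lemma eq_zero_if_truncations_nonpos: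
  assumes "\<zero> \<preceq> x" and "\<And>n. x \<sqinter> real (Suc n) \<odot> vone V \<preceq> \<zero>"
  shows "x = \<zero>"
proof -
  have "vsupr V x (\<lambda>n. x \<sqinter> real (Suc n) \<odot> vone V) = x"
    using vsupr_abs_truncations[of x] assms(1) by simp
  moreover have "vsupr V x (\<lambda>n. x \<sqinter> real (Suc n) \<odot> vone V) \<preceq> \<zero>"
  proof (rule is_lub_least[OF vsupr_is_lub])
    fix y assume "y \<in> range (\<lambda>n. x \<sqinter> real (Suc n) \<odot> vone V \<sqinter> x)"
    then obtain n where "y = x \<sqinter> real (Suc n) \<odot> vone V \<sqinter> x"
      by blast
    then show "y \<preceq> \<zero>"
      using rs.le_infI1[OF assms(2)[of n]] by blast
  qed
  ultimately show ?thesis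
    using assms(1) by simp
qed

lemma vone_nonneg: "\<zero> \<preceq> vone V"
proof -
  let ?e = "vone V" and ?p = "rs.pprt (rneg R (vone V))"
  have "?p \<sqinter> real (Suc n) \<odot> ?e \<preceq> ?p \<sqinter> real (Suc n) \<odot> rs.pprt ?e" for n
    by (intro rs.inf_mono rs.order.refl rs.scaleR_left_mono) (simp_all add: rs.pprt_def)
  also have "?p \<sqinter> real (Suc n) \<odot> rs.pprt ?e = \<zero>" for n
    using pprt_inf_pprt_uminus[of ?e]
    by (intro disjoint_rscale_of_nat) (simp_all add: rs.inf_commute)
  finally have "?p = \<zero>"
    by (intro eq_zero_if_truncations_nonpos) simp_all
  then show ?thesis
    by (simp add: rs.le_zero_iff_zero_pprt[symmetric])
qed

lemma weak_unit_vone: "weak_unit R (vone V)"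
  unfolding weak_unit_def
proof (intro conjI allI impI)
  show "\<zero> \<preceq> vone V"
    by (rule vone_nonneg)
  fix x assume disj: "x \<sqinter> vone V = \<zero>"
  then have "\<zero> \<preceq> x"
    by (metis rs.inf_le1)
  moreover have "x \<sqinter> real (Suc n) \<odot> vone V \<preceq> \<zero>" for n
    unfolding disjoint_rscale_of_nat[OF vone_nonneg disj] by (rule rs.order.refl)
  ultimately show "x = \<zero>"
    by (rule eq_zero_if_truncations_nonpos)
qed

lemma sigma_complete_vops: "sigma_complete R"
  unfolding sigma_complete_def
proof (intro allI impI)
  fix S assume "countable S \<and> S \<noteq> {} \<and> (\<exists>b. \<forall>x\<in>S. x \<preceq> b)"
  then obtain b where "countable S" "S \<noteq> {}" "\<And>x. x \<in> S \<Longrightarrow> x \<preceq> b"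
    by blast
  then have "S = range (\<lambda>n. from_nat_into S n \<sqinter> b)"
    by (rule range_truncate_from_nat_into[symmetric])
  then show "\<exists>s. is_lub R S s"
    using vsupr_is_lub by metis
qed

sublocale sigma_complete_riesz R
  by unfold_locales (rule sigma_complete_vops)

lemma vsupr_eq_rSup: "vsupr V g f = rSup R (range (\<lambda>n. f n \<sqinter> g))"
  by (rule rSup_eq[symmetric]) (rule vsupr_is_lub)

end

lemma E_u_simps [simp]:
  "vops (E_u A) = sops A" "vone (E_u A) = sunit A"
  "vsupr (E_u A) g f = rSup (sops A) (range (\<lambda>n. rinf (sops A) (f n) g))"
  by (simp_all add: E_u_def)

lemma T_u_simps [simp]: "sops (T_u V) = vops V" "sunit (T_u V) = vone V"
  by (simp_all add: T_u_def)

lemma T_u_E_u: "T_u (E_u A) = A"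
  by (simp add: T_u_def E_u_def)

lemma sigma_complete_riesz_sops: "srsu_obj A \<Longrightarrow> sigma_complete_riesz (sops A)"
  unfolding srsu_obj_def sigma_complete_riesz_def sigma_complete_riesz_axioms_def riesz_def
  by blast

lemma riesz_algebra_vops: "valg_obj V \<Longrightarrow> riesz_algebra (vops V) V"
  unfolding riesz_algebra_def riesz_algebra_axioms_def riesz_def valg_obj_def by blast

lemma valg_obj_E_u:
  assumes "srsu_obj A"
  shows "valg_obj (E_u A)"
proof -
  interpret sigma_complete_riesz "sops A"
    using assms by (rule sigma_complete_riesz_sops)
  have unit: "weak_unit (sops A) (sunit A)"
    using assms unfolding srsu_obj_def by blast
  show ?thesis
    unfolding valg_obj_def E_u_simps
  proof (intro conjI allI)
    fix g h x and f :: "nat \<Rightarrow> 'a"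
    show "riesz_space (sops A)"
      by (rule riesz_space)
    show "rSup (sops A) (range (\<lambda>n. rinf (sops A) (f n) g))
        = rSup (sops A) (range (\<lambda>n. rinf (sops A) (rinf (sops A) (f n) g) g))"
      by (simp only: rs.inf.right_idem)
    show "rSup (sops A) (range (\<lambda>n. rinf (sops A) (f n) g))
        = rsup (sops A) (rinf (sops A) (f 0) g) (rSup (sops A) (range (\<lambda>n. rinf (sops A) (f (Suc n)) g)))"
      by (rule rSup_range_inf_Suc)
    show "rle (sops A) (rSup (sops A) (range (\<lambda>n. rinf (sops A) (rinf (sops A) (f n) h) g))) h"
      by (rule rSup_range_inf_le)
    show "rSup (sops A) (range (\<lambda>n. rinf (sops A)
          (rinf (sops A) (rabs (sops A) x) (rscale (sops A) (real (Suc n)) (sunit A))) (rabs (sops A) x)))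
        = rabs (sops A) x"
      by (rule rSup_truncations[OF unit rs.abs_ge_zero])
  qed
qed

lemma srsu_obj_T_u: "valg_obj V \<Longrightarrow> srsu_obj (T_u V)"
proof -
  assume "valg_obj V"
  then interpret riesz_algebra "vops V" V
    by (rule riesz_algebra_vops)
  show ?thesis
    unfolding srsu_obj_def using riesz_space sigma_complete weak_unit_vone by simp
qed

lemma E_u_T_u: "valg_obj V \<Longrightarrow> E_u (T_u V) = V"
proof -
  assume "valg_obj V"
  then interpret riesz_algebra "vops V" V
    by (rule riesz_algebra_vops)
  show ?thesis
    by (rule valg.equality) (simp_all add: E_u_def T_u_def vsupr_eq_rSup fun_eq_iff)
qed

lemma riesz_hom_rzero:
  assumes "riesz Q" "riesz R" "riesz_hom Q R h"
  shows "h (rzero Q) = rzero R"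
proof -
  interpret Q: riesz Q by fact
  interpret R: riesz R by fact
  have "radd R (h (rzero Q)) (h (rzero Q)) = radd R (h (rzero Q)) (rzero R)"
    using assms(3) unfolding riesz_hom_def by (metis Q.rs.add_0 R.rs.add_0_right)
  then show ?thesis
    by (simp only: R.rs.add_left_cancel)
qed

lemma riesz_hom_rneg:
  assumes "riesz Q" "riesz R" "riesz_hom Q R h"
  shows "h (rneg Q x) = rneg R (h x)"
proof -
  interpret Q: riesz Q by fact
  interpret R: riesz R by fact
  have "radd R (h (rneg Q x)) (h x) = rzero R"
    using assms(3) riesz_hom_rzero[OF assms] unfolding riesz_hom_def by (metis Q.rs.left_minus)
  then show ?thesis
    by (simp only: R.rs.eq_neg_iff_add_eq_0)
qed

lemma valg_hom_E_u_iff: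
  assumes "riesz (sops A)" "riesz (sops B)"
  shows "valg_hom (E_u A) (E_u B) h \<longleftrightarrow>
    riesz_hom (sops A) (sops B) h \<and>
    (\<forall>g (f :: nat \<Rightarrow> 'a). h (rSup (sops A) (range (\<lambda>n. rinf (sops A) (f n) g)))
         = rSup (sops B) (range (\<lambda>n. rinf (sops B) (h (f n)) (h g)))) \<and>
    h (sunit A) = sunit B"
    (is "_ \<longleftrightarrow> _ \<and> ?seqs \<and> ?unit")
proof
  assume "valg_hom (E_u A) (E_u B) h"
  then show "riesz_hom (sops A) (sops B) h \<and> ?seqs \<and> ?unit"
    unfolding valg_hom_def riesz_hom_def E_u_simps by blast
next
  assume hom: "riesz_hom (sops A) (sops B) h \<and> ?seqs \<and> ?unit"
  then show "valg_hom (E_u A) (E_u B) h"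
    using riesz_hom_rzero[OF assms] riesz_hom_rneg[OF assms]
    unfolding valg_hom_def E_u_simps by (simp add: riesz_hom_def)
qed

lemma preserves_countable_lubs_iff:
  assumes "sigma_complete_riesz Q" "sigma_complete_riesz R"
    and inf: "\<And>x y. h (rinf Q x y) = rinf R (h x) (h y)"
  shows "(\<forall>S s. countable S \<and> S \<noteq> {} \<and> is_lub Q S s \<longrightarrow> is_lub R (h ` S) (h s)) \<longleftrightarrow>
    (\<forall>g (f :: nat \<Rightarrow> 'a). h (rSup Q (range (\<lambda>n. rinf Q (f n) g)))
         = rSup R (range (\<lambda>n. rinf R (h (f n)) (h g))))"
    (is "?lubs \<longleftrightarrow> ?seqs")
proof
  interpret Q: sigma_complete_riesz Q by fact
  interpret R: sigma_complete_riesz R by fact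
  have image: "h ` range (\<lambda>n. rinf Q (f n) g) = range (\<lambda>n. rinf R (h (f n)) (h g))"
    for f :: "nat \<Rightarrow> 'a" and g
    by (auto simp: inf image_image)
  show ?seqs if ?lubs
  proof (intro allI)
    fix g and f :: "nat \<Rightarrow> 'a"
    have "is_lub R (range (\<lambda>n. rinf R (h (f n)) (h g))) (h (rSup Q (range (\<lambda>n. rinf Q (f n) g))))"
      using that Q.is_lub_range_inf[of f g] countable_image[OF countableI_type]
      unfolding image[symmetric] by blast
    then show "h (rSup Q (range (\<lambda>n. rinf Q (f n) g))) = rSup R (range (\<lambda>n. rinf R (h (f n)) (h g)))"
      by (rule R.rSup_eq[symmetric])
  qed
  show ?lubs if ?seqs
  proof (intro allI impI)
    fix S s assume "countable S \<and> S \<noteq> {} \<and> is_lub Q S s"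
    then have S: "countable S" "S \<noteq> {}" and s: "is_lub Q S s"
      by blast+
    define e where "e = from_nat_into S"
    have S_eq: "range (\<lambda>n. rinf Q (e n) s) = S"
      unfolding e_def using S Q.is_lub_upper[OF s] by (rule Q.range_truncate_from_nat_into)
    have "h s = rSup R (range (\<lambda>n. rinf R (h (e n)) (h s)))"
      using that Q.rSup_eq[OF s] unfolding S_eq[symmetric] by metis
    then show "is_lub R (h ` S) (h s)"
      using R.is_lub_range_inf[of "\<lambda>n. h (e n)" "h s"]
      unfolding S_eq[symmetric] image by (simp only:)
  qed
qed

lemma srsu_hom_iff_valg_hom_E_u:
  assumes "srsu_obj A" "srsu_obj B"
  shows "srsu_hom A B h \<longleftrightarrow> valg_hom (E_u A) (E_u B) h"
proof -
  have A: "sigma_complete_riesz (sops A)" and B: "sigma_complete_riesz (sops B)"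
    using assms by (simp_all add: sigma_complete_riesz_sops)
  then have "riesz (sops A)" "riesz (sops B)"
    by (simp_all add: sigma_complete_riesz_def)
  then show ?thesis
    unfolding srsu_hom_def valg_hom_E_u_iff[OF \<open>riesz (sops A)\<close> \<open>riesz (sops B)\<close>]
  proof (intro conj_cong refl)
    assume "riesz_hom (sops A) (sops B) h"
    then show "(\<forall>S s. countable S \<and> S \<noteq> {} \<and> is_lub (sops A) S s \<longrightarrow> is_lub (sops B) (h ` S) (h s))
      \<longleftrightarrow> (\<forall>g (f :: nat \<Rightarrow> 'a). h (rSup (sops A) (range (\<lambda>n. rinf (sops A) (f n) g)))
         = rSup (sops B) (range (\<lambda>n. rinf (sops B) (h (f n)) (h g))))"
      unfolding riesz_hom_def by (intro preserves_countable_lubs_iff[OF A B]) blast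
  qed
qed

theorem mainTheorem4:
  shows "(\<forall>A :: 'a srsu. srsu_obj A \<longrightarrow> valg_obj (E_u A) \<and> T_u (E_u A) = A)
       \<and> (\<forall>V :: 'a valg. valg_obj V \<longrightarrow> srsu_obj (T_u V) \<and> E_u (T_u V) = V)
       \<and> (\<forall>(A :: 'a srsu) (B :: 'b srsu) (h :: 'a \<Rightarrow> 'b).
            srsu_obj A \<longrightarrow> srsu_obj B \<longrightarrow> (srsu_hom A B h \<longleftrightarrow> valg_hom (E_u A) (E_u B) h))
       \<and> (\<forall>(V :: 'a valg) (W :: 'b valg) (h :: 'a \<Rightarrow> 'b).
            valg_obj V \<longrightarrow> valg_obj W \<longrightarrow> (valg_hom V W h \<longleftrightarrow> srsu_hom (T_u V) (T_u W) h))"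
proof (intro conjI allI impI)
  fix V :: "'a valg" and W :: "'b valg" and h
  assume V: "valg_obj V" and W: "valg_obj W"
  have "valg_hom V W h \<longleftrightarrow> valg_hom (E_u (T_u V)) (E_u (T_u W)) h"
    by (simp only: E_u_T_u[OF V] E_u_T_u[OF W])
  also have "\<dots> \<longleftrightarrow> srsu_hom (T_u V) (T_u W) h"
    by (rule srsu_hom_iff_valg_hom_E_u[symmetric]) (use V W srsu_obj_T_u in blast)+
  finally show "valg_hom V W h \<longleftrightarrow> srsu_hom (T_u V) (T_u W) h" .
qed (simp_all add: valg_obj_E_u T_u_E_u srsu_obj_T_u E_u_T_u srsu_hom_iff_valg_hom_E_u)

end
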